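(* Under the standing setup, fix an integer $K>1$. For integers $B>1$ with $\mu_B:=E(\min(Z_1,B))>1$ and $n>K$, define the pruned set $D_n^{(B)}$ as follows: for each $u\in D_{n-K}$ put $\mathcal V_0(u)=\{u\}$ and, for $i=1,\dots,K$, let $\mathcal V_i(u)$ be the set of vertices $(w,j)$ with $w\in\mathcal V_{i-1}(u)$ and $1\le j\le B$ (i.e. the first at most $B$ children, in Ulam–Harris order, of vertices of $\mathcal V_{i-1}(u)$); let $D_n^{(B)}:=\bigcup_{u\in D_{n-K}}\mathcal V_K(u)$. Define $\tilde N_n^{(K,B)}:=\sum_{v\in D_n^{(B)}}\sum_{e\in I_v^K}\delta_{b_n^{-1}X_e}$ and $\tilde N_n^{(K)}:=\sum_{|v|=n}\sum_{e\in I_v^K}\delta_{b_n^{-1}X_e}$. Then for every $\epsilon>0$, $$\lim_{B\to\infty}\limsup_{n\to\infty}P^*\big(\rho(\tilde N_n^{(K)},\tilde N_n^{(K,B)})>\epsilon\big)=0.$$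
   Context: Standing setup. Let $\{Z_i\}_{i\ge0}$ be a Galton–Watson process with $Z_0\equiv1$ and offspring variable $Z_1$ with mean $\mu:=E(Z_1)\in(1,\infty)$, satisfying $E(Z_1\log^+Z_1)<\infty$, with genealogical tree rooted at $o$, vertices labelled in Ulam–Harris fashion (the children of vertex $w$ are $(w,1),(w,2),\dots$). For a vertex $v$, $|v|$ is its generation and $I_v$ the set of edges of the path from $o$ to $v$; each edge is identified with its endpoint farther from the root and belongs to generation $m$ if that endpoint has generation $m$; $D_m$ is the set of generation-$m$ vertices. For $|v|=n>K$, $I_v^K$ is the set of edges of $I_v$ in generations $n-K+1,\dots,n$. Independently of the tree, attach i.i.d. real random variables $X_e$ to the edges with $P(|X_e|>x)=x^{-\alpha}L(x)$ ($\alpha>0$, $L$ slowly varying) and $P(X_e>x)/P(|X_e|>x)\to p$, $P(X_e<-x)/P(|X_e|>x)\to q$, $p,q\ge0$, $p+q=1$. Let $b_n>0$ satisfy $\mu^nP(b_n^{-1}X_e\in\cdot)\to\nu_\alpha$ vaguely on $\mathbb E:=[-\infty,\infty]\setminus\{0\}$, with $\nu_\alpha(dx)=\alpha px^{-\alpha-1}\mathbf 1_{(0,\infty)}(x)dx+\alpha q(-x)^{-\alpha-1}\mathbf 1_{(-\infty,0)}(x)dx$. $P^*$ denotes conditioning on survival. $\rho$ is a metric on the space $\mathscr M$ of Radon point measures on $\mathbb E$ of the form $\rho(m_1,m_2)=\sum_{i\ge1}2^{-i}\min(|m_1(h_i)-m_2(h_i)|,1)$, where $\{h_i\}$ is a fixed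 sequence of nonnegative Lipschitz continuous compactly supported functions on $\mathbb E$ chosen so that $\rho$ metrizes the vague topology. *)

theory Defs
  imports "HOL-Probability.Probability"
begin

text \<open>Vertices are lists of positive naturals; the root o is the empty list, and the
children of w are w @ [1], w @ [2], ...  The offspring count of vertex w is xi w omega.
An edge is identified with its endpoint farther from the root (a nonempty list);
the generation of a vertex is its length.\<close>

definition gw_tree :: "(nat list \<Rightarrow> 'a \<Rightarrow> nat) \<Rightarrow> 'a \<Rightarrow> nat list set" where
  "gw_tree xi \<omega> = {v. \<forall>k<length v. 1 \<le> v ! k \<and> v ! k \<le> xi (take k v) \<omega>}"

definition gen :: "(nat list \<Rightarrow> 'a \<Rightarrow> nat) \<Rightarrow> 'a \<Rightarrow> nat \<Rightarrow> nat list set" where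
  "gen xi \<omega> m = {v \<in> gw_tree xi \<omega>. length v = m}"

definition survives :: "(nat list \<Rightarrow> 'a \<Rightarrow> nat) \<Rightarrow> 'a \<Rightarrow> bool" where
  "survives xi \<omega> \<longleftrightarrow> (\<forall>m. gen xi \<omega> m \<noteq> {})"

definition Pstar :: "'a measure \<Rightarrow> (nat list \<Rightarrow> 'a \<Rightarrow> nat) \<Rightarrow> 'a set \<Rightarrow> real" where
  "Pstar M xi A = measure M (A \<inter> {\<omega> \<in> space M. survives xi \<omega>})
                  / measure M {\<omega> \<in> space M. survives xi \<omega>}"

fun prunedV :: "(nat list \<Rightarrow> 'a \<Rightarrow> nat) \<Rightarrow> nat \<Rightarrow> 'a \<Rightarrow> nat list \<Rightarrow> nat \<Rightarrow> nat list set" where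
  "prunedV xi B \<omega> u 0 = {u}"
| "prunedV xi B \<omega> u (Suc i) =
     {w @ [j] | w j. w \<in> prunedV xi B \<omega> u i \<and> 1 \<le> j \<and> j \<le> B \<and> j \<le> xi w \<omega>}"

definition pruned_gen :: "(nat list \<Rightarrow> 'a \<Rightarrow> nat) \<Rightarrow> nat \<Rightarrow> nat \<Rightarrow> 'a \<Rightarrow> nat \<Rightarrow> nat list set" where
  "pruned_gen xi B K \<omega> n = (\<Union>u \<in> gen xi \<omega> (n - K). prunedV xi B \<omega> u K)"

text \<open>A point measure on E is represented by its multiplicity function c (c x = mass at x);
it is Radon iff every compact subset of E, i.e. every closed set contained in some
{x. delta <= |x|}, carries finitely many atoms.\<close>
definition radon_pm :: "(ereal \<Rightarrow> nat) \<Rightarrow> bool" where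
  "radon_pm c \<longleftrightarrow> c 0 = 0 \<and> (\<forall>\<delta>>0. finite {x. c x \<noteq> 0 \<and> ereal \<delta> \<le> \<bar>x\<bar>})"

text \<open>The point measure sum_{i in I} delta_{g i} on E (atoms at 0 are not in E and are dropped).\<close>
definition pt_measure :: "'i set \<Rightarrow> ('i \<Rightarrow> real) \<Rightarrow> ereal \<Rightarrow> nat" where
  "pt_measure I g x = (if x = 0 then 0 else card {i \<in> I. ereal (g i) = x})"

definition pm_int :: "(ereal \<Rightarrow> nat) \<Rightarrow> (ereal \<Rightarrow> real) \<Rightarrow> real" where
  "pm_int c f = (\<Sum>x \<in> {x. c x \<noteq> 0 \<and> f x \<noteq> 0}. real (c x) * f x)"

text \<open>Continuous functions with compact support in E (support avoids a neighbourhood of 0).\<close>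
definition CK :: "(ereal \<Rightarrow> real) \<Rightarrow> bool" where
  "CK f \<longleftrightarrow> continuous_on UNIV f \<and> (\<exists>\<delta>>0. \<forall>x. \<bar>x\<bar> < ereal \<delta> \<longrightarrow> f x = 0)"

definition CK_plus :: "(ereal \<Rightarrow> real) \<Rightarrow> bool" where
  "CK_plus f \<longleftrightarrow> CK f \<and> (\<forall>x. 0 \<le> f x)"

definition lipschitz_E :: "(ereal \<Rightarrow> real) \<Rightarrow> bool" where
  "lipschitz_E f \<longleftrightarrow> (\<exists>L. \<forall>x y::real. \<bar>f (ereal x) - f (ereal y)\<bar> \<le> L * \<bar>x - y\<bar>)"

text \<open>rho(m1,m2) = sum_{i>=1} 2^{-i} min(|m1(h_i) - m2(h_i)|, 1), indexed from 0 here.\<close>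
definition rho :: "(nat \<Rightarrow> ereal \<Rightarrow> real) \<Rightarrow> (ereal \<Rightarrow> nat) \<Rightarrow> (ereal \<Rightarrow> nat) \<Rightarrow> real" where
  "rho h m1 m2 = (\<Sum>i. (1/2) ^ Suc i * min \<bar>pm_int m1 (h i) - pm_int m2 (h i)\<bar> 1)"

definition metrizes_vague :: "(nat \<Rightarrow> ereal \<Rightarrow> real) \<Rightarrow> bool" where
  "metrizes_vague h \<longleftrightarrow>
     (\<forall>ms m. radon_pm m \<and> (\<forall>k. radon_pm (ms k)) \<longrightarrow>
        ((\<lambda>k. rho h (ms k) m) \<longlonglongrightarrow> 0) \<longleftrightarrow>
        (\<forall>f. CK_plus f \<longrightarrow> (\<lambda>k. pm_int (ms k) f) \<longlonglongrightarrow> pm_int m f))"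

definition slowly_varying :: "(real \<Rightarrow> real) \<Rightarrow> bool" where
  "slowly_varying L \<longleftrightarrow> (\<forall>\<^sub>F x in at_top. L x > 0) \<and>
     (\<forall>c>0. ((\<lambda>x. L (c * x) / L x) \<longlongrightarrow> 1) at_top)"

text \<open>nu_alpha(f) for f on E; nu_alpha puts no mass on +-oo.\<close>
definition nu_int :: "real \<Rightarrow> real \<Rightarrow> real \<Rightarrow> (ereal \<Rightarrow> real) \<Rightarrow> real" where
  "nu_int \<alpha> p q f =
     (LINT x:{0<..}|lborel. f (ereal x) * (\<alpha> * p * x powr (- \<alpha> - 1)))
   + (LINT x:{..<0}|lborel. f (ereal x) * (\<alpha> * q * (- x) powr (- \<alpha> - 1)))"

text \<open>tilde N_n^{(K)}: sum over |v| = n and edges e of I_v^K (e = take k v, n-K < k <= n).\<close>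
definition NK :: "(nat list \<Rightarrow> 'a \<Rightarrow> nat) \<Rightarrow> (nat list \<Rightarrow> 'a \<Rightarrow> real) \<Rightarrow> (nat \<Rightarrow> real)
                  \<Rightarrow> nat \<Rightarrow> nat \<Rightarrow> 'a \<Rightarrow> ereal \<Rightarrow> nat" where
  "NK xi X b K n \<omega> = pt_measure {(v, k). v \<in> gen xi \<omega> n \<and> n - K < k \<and> k \<le> n}
                        (\<lambda>(v, k). X (take k v) \<omega> / b n)"

definition NKB :: "(nat list \<Rightarrow> 'a \<Rightarrow> nat) \<Rightarrow> (nat list \<Rightarrow> 'a \<Rightarrow> real) \<Rightarrow> (nat \<Rightarrow> real)
                  \<Rightarrow> nat \<Rightarrow> nat \<Rightarrow> nat \<Rightarrow> 'a \<Rightarrow> ereal \<Rightarrow> nat" where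
  "NKB xi X b K B n \<omega> = pt_measure {(v, k). v \<in> pruned_gen xi B K \<omega> n \<and> n - K < k \<and> k \<le> n}
                        (\<lambda>(v, k). X (take k v) \<omega> / b n)"

end

theory Submission
  imports Defs
begin

text \<open>Only finitely many test functions \<open>h\<^sub>0, \<dots>, h\<^sub>N\<^sub>-\<^sub>1\<close> matter up to \<open>2\<^sup>-\<^sup>N\<close> in \<open>\<rho>\<close>, and
they all vanish on some neighbourhood \<open>|x| < \<delta>\<close> of 0. So the two point processes are
\<open>2\<^sup>-\<^sup>N\<close>-close unless some generation-\<open>n\<close> vertex removed by the pruning, i.e. one with a
label \<open>> B\<close> among its last \<open>K\<close> labels, carries an edge variable \<open>|X\<^sub>e| \<ge> \<delta> b\<^sub>n\<close> on its
last \<open>K\<close> edges. By independence, the expected number of such (vertex, edge) pairs is at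
most \<open>K\<^sup>2 \<mu>\<^sup>n\<^sup>-\<^sup>1 (\<Sum>\<^sub>j\<^sub>>\<^sub>B P(Z\<^sub>1 \<ge> j)) P(|X| \<ge> \<delta> b\<^sub>n)\<close>. Vague convergence keeps
\<open>\<mu>\<^sup>n P(|X| \<ge> \<delta> b\<^sub>n)\<close> bounded, and \<open>\<Sum>\<^sub>j\<^sub>>\<^sub>B P(Z\<^sub>1 \<ge> j) \<rightarrow> 0\<close> as \<open>B \<rightarrow> \<infinity>\<close> since \<open>E Z\<^sub>1 < \<infinity>\<close>.\<close>

section \<open>Generations and pruned generations\<close>

lemma gw_tree_iff: "v \<in> gw_tree xi \<omega> \<longleftrightarrow> (\<forall>k<length v. 1 \<le> v!k \<and> v!k \<le> xi (take k v) \<omega>)"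
  by (simp add: gw_tree_def)

lemma butlast_snoc_nth: "length v = Suc n \<Longrightarrow> v = butlast v @ [v ! n]"
  by (metis append_butlast_last_id diff_Suc_1 last_conv_nth length_0_conv length_butlast nat.distinct(1))

lemma gen_Suc: "gen xi \<omega> (Suc n) = (\<Union>w\<in>gen xi \<omega> n. (\<lambda>j. w @ [j]) ` {1..xi w \<omega>})"
proof (intro set_eqI iffI)
  fix v assume v: "v \<in> gen xi \<omega> (Suc n)"
  then have len: "length v = Suc n" by (simp add: gen_def)
  have "butlast v \<in> gen xi \<omega> n"
    using v len unfolding gen_def gw_tree_iff by (auto simp: nth_butlast take_butlast)
  moreover have "v!n \<in> {1..xi (butlast v) \<omega>}"
    using v len unfolding gen_def gw_tree_iff by (auto simp: butlast_conv_take)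
  ultimately show "v \<in> (\<Union>w\<in>gen xi \<omega> n. (\<lambda>j. w @ [j]) ` {1..xi w \<omega>})"
    using butlast_snoc_nth[OF len] by blast
next
  fix v assume "v \<in> (\<Union>w\<in>gen xi \<omega> n. (\<lambda>j. w @ [j]) ` {1..xi w \<omega>})"
  then obtain w j where "w \<in> gen xi \<omega> n" "1 \<le> j" "j \<le> xi w \<omega>" "v = w @ [j]" by auto
  then show "v \<in> gen xi \<omega> (Suc n)"
    unfolding gen_def gw_tree_iff by (auto simp: nth_append less_Suc_eq)
qed

lemma finite_gen: "finite (gen xi \<omega> n)"
proof (induction n)
  case 0
  have "gen xi \<omega> 0 \<subseteq> {[]}" by (auto simp: gen_def)
  then show ?case using finite_subset by blast
next
  case (Suc n)
  then show ?case by (simp add: gen_Suc)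
qed

lemma prunedV_eq:
  assumes "length u = m"
  shows "prunedV xi B \<omega> u i = {v. length v = m + i \<and> take m v = u \<and>
            (\<forall>k. m \<le> k \<and> k < m + i \<longrightarrow> 1 \<le> v!k \<and> v!k \<le> B \<and> v!k \<le> xi (take k v) \<omega>)}"
proof (induction i)
  case 0
  then show ?case using assms by auto
next
  case (Suc i)
  show ?case
  proof (intro set_eqI iffI)
    fix v assume "v \<in> prunedV xi B \<omega> u (Suc i)"
    then obtain w j where w: "w \<in> prunedV xi B \<omega> u i" and "1 \<le> j" "j \<le> B" "j \<le> xi w \<omega>"
      and "v = w @ [j]" by auto
    with w Suc.IH show "v \<in> {v. length v = m + Suc i \<and> take m v = u \<and>
            (\<forall>k. m \<le> k \<and> k < m + Suc i \<longrightarrow> 1 \<le> v!k \<and> v!k \<le> B \<and> v!k \<le> xi (take k v) \<omega>)}"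
      by (auto simp: nth_append less_Suc_eq)
  next
    fix v assume v: "v \<in> {v. length v = m + Suc i \<and> take m v = u \<and>
            (\<forall>k. m \<le> k \<and> k < m + Suc i \<longrightarrow> 1 \<le> v!k \<and> v!k \<le> B \<and> v!k \<le> xi (take k v) \<omega>)}"
    then have len: "length v = Suc (m + i)" by simp
    have "butlast v \<in> prunedV xi B \<omega> u i"
      using v unfolding Suc.IH by (auto simp: nth_butlast take_butlast)
    moreover have "1 \<le> v!(m+i) \<and> v!(m+i) \<le> B \<and> v!(m+i) \<le> xi (butlast v) \<omega>"
      using v len by (auto simp: butlast_conv_take)
    ultimately show "v \<in> prunedV xi B \<omega> u (Suc i)"
      using butlast_snoc_nth[OF len] by (simp only: prunedV.simps) blast
  qed
qed

lemma pruned_gen_eq: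
  assumes "K \<le> n"
  shows "pruned_gen xi B K \<omega> n = {v \<in> gen xi \<omega> n. \<forall>k. n - K \<le> k \<and> k < n \<longrightarrow> v!k \<le> B}"
proof (intro set_eqI iffI)
  fix v assume "v \<in> pruned_gen xi B K \<omega> n"
  then obtain u where u: "u \<in> gen xi \<omega> (n - K)" and v: "v \<in> prunedV xi B \<omega> u K"
    by (auto simp: pruned_gen_def)
  have lu: "length u = n - K" using u by (simp add: gen_def)
  from v assms have lv: "length v = n" and tv: "take (n - K) v = u"
    and vk: "\<forall>k. n - K \<le> k \<and> k < n \<longrightarrow> 1 \<le> v!k \<and> v!k \<le> B \<and> v!k \<le> xi (take k v) \<omega>"
    unfolding prunedV_eq[OF lu] by auto
  have "v \<in> gw_tree xi \<omega>"
    unfolding gw_tree_iff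
  proof (intro allI impI)
    fix k assume k: "k < length v"
    show "1 \<le> v!k \<and> v!k \<le> xi (take k v) \<omega>"
    proof (cases "k < n - K")
      case True
      then have "1 \<le> u!k \<and> u!k \<le> xi (take k u) \<omega>"
        using u lu by (simp add: gen_def gw_tree_iff)
      moreover have "u!k = v!k" "take k u = take k v" using True tv by auto
      ultimately show ?thesis by simp
    next
      case False
      then show ?thesis using vk k lv by auto
    qed
  qed
  then show "v \<in> {v \<in> gen xi \<omega> n. \<forall>k. n - K \<le> k \<and> k < n \<longrightarrow> v!k \<le> B}"
    using lv vk by (simp add: gen_def)
next
  fix v assume v: "v \<in> {v \<in> gen xi \<omega> n. \<forall>k. n - K \<le> k \<and> k < n \<longrightarrow> v!k \<le> B}"
  then have lv: "length v = n" and vt: "v \<in> gw_tree xi \<omega>" by (auto simp: gen_def)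
  have "take (n - K) v \<in> gen xi \<omega> (n - K)"
    using vt lv unfolding gen_def gw_tree_iff by (auto simp: min_def)
  moreover have "v \<in> prunedV xi B \<omega> (take (n - K) v) K"
  proof -
    have lu: "length (take (n - K) v) = n - K" using lv by simp
    show ?thesis unfolding prunedV_eq[OF lu]
      using lv v vt assms by (auto simp: gw_tree_iff min_def)
  qed
  ultimately show "v \<in> pruned_gen xi B K \<omega> n"
    by (auto simp: pruned_gen_def)
qed

section \<open>Comparing the two point processes\<close>

lemma pm_int_pt_measure:
  assumes fin: "finite I" and f0: "f 0 = 0"
  shows "pm_int (pt_measure I g) f = (\<Sum>i\<in>I. f (ereal (g i)))"
proof -
  let ?c = "pt_measure I g"
  let ?T = "(\<lambda>i. ereal (g i)) ` I"
  have sub: "{x. ?c x \<noteq> 0 \<and> f x \<noteq> 0} \<subseteq> ?T"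
  proof
    fix x assume "x \<in> {x. ?c x \<noteq> 0 \<and> f x \<noteq> 0}"
    then have "{i \<in> I. ereal (g i) = x} \<noteq> {}" by (auto simp: pt_measure_def card_gt_0_iff split: if_splits)
    then show "x \<in> ?T" by blast
  qed
  have "pm_int ?c f = (\<Sum>x\<in>?T. real (?c x) * f x)"
    unfolding pm_int_def by (rule sum.mono_neutral_left) (use fin sub in auto)
  also have "\<dots> = (\<Sum>x\<in>?T. \<Sum>i\<in>{i\<in>I. ereal (g i) = x}. f (ereal (g i)))"
  proof (rule sum.cong[OF refl])
    fix x
    have "(\<Sum>i\<in>{i\<in>I. ereal (g i) = x}. f (ereal (g i))) = (\<Sum>i\<in>{i\<in>I. ereal (g i) = x}. f x)"
      by (rule sum.cong) auto
    then show "real (?c x) * f x = (\<Sum>i\<in>{i\<in>I. ereal (g i) = x}. f (ereal (g i)))"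
      using f0 by (simp add: pt_measure_def)
  qed
  also have "\<dots> = (\<Sum>i\<in>I. f (ereal (g i)))"
    by (rule sum.image_gen[symmetric, OF fin])
  finally show ?thesis .
qed

lemma rho_le_if_pm_int_eq:
  assumes "\<And>i. i < N \<Longrightarrow> pm_int m1 (h i) = pm_int m2 (h i)"
  shows "rho h m1 m2 \<le> (1/2) ^ N"
proof -
  define t where "t i = (1/2::real) ^ Suc i * min \<bar>pm_int m1 (h i) - pm_int m2 (h i)\<bar> 1" for i
  have t_le: "t i \<le> (1/2) ^ Suc i" for i
    unfolding t_def by (rule mult_left_le) auto
  have geom: "summable (\<lambda>i. (1/2::real) ^ Suc i)"
    using summable_geometric[of "1/2::real"] by (simp add: summable_mult)
  have t: "summable t"
    by (rule summable_comparison_test'[OF geom]) (use t_le in \<open>auto simp: t_def\<close>)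
  have "rho h m1 m2 = (\<Sum>i<N. t i) + (\<Sum>i. t (i + N))"
    unfolding rho_def t_def[symmetric] using suminf_split_initial_segment[OF t, of N] by simp
  also have "(\<Sum>i<N. t i) = 0" using assms by (simp add: t_def)
  also have "(\<Sum>i. t (i + N)) \<le> (\<Sum>i. (1/2::real) ^ Suc (i + N))"
    using t_le summable_ignore_initial_segment[OF t] summable_ignore_initial_segment[OF geom, of N]
    by (intro suminf_le) auto
  also have "\<dots> = (1/2)^Suc N * (\<Sum>i. (1/2::real) ^ i)"
    by (subst suminf_mult[symmetric]) (auto simp: power_add mult_ac summable_geometric)
  also have "\<dots> = (1/2)^N"
    by (subst suminf_geometric) auto
  finally show ?thesis by simp
qed

lemma CK_vanish_uniform:
  fixes h :: "nat \<Rightarrow> ereal \<Rightarrow> real" and N :: nat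
  assumes "\<And>i. CK (h i)"
  obtains \<delta> where "0 < \<delta>" "\<And>i x. i < N \<Longrightarrow> \<bar>x\<bar> < ereal \<delta> \<Longrightarrow> h i x = 0"
proof -
  have "\<forall>i. \<exists>\<delta>>0. \<forall>x. \<bar>x\<bar> < ereal \<delta> \<longrightarrow> h i x = 0"
    using assms by (simp add: CK_def)
  then obtain d where d: "\<And>i. 0 < d i" "\<And>i x. \<bar>x\<bar> < ereal (d i) \<Longrightarrow> h i x = 0"
    by metis
  define \<delta> where "\<delta> = Min (insert 1 (d ` {..<N}))"
  have "0 < \<delta>" unfolding \<delta>_def using d(1) by (subst Min_gr_iff) auto
  moreover have "h i x = 0" if "i < N" "\<bar>x\<bar> < ereal \<delta>" for i x
  proof -
    have "\<delta> \<le> d i" unfolding \<delta>_def using that(1) by (intro Min_le) auto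
    then have "\<bar>x\<bar> < ereal (d i)" using that(2) by (meson ereal_less_eq(3) order_less_le_trans)
    then show ?thesis by (rule d(2))
  qed
  ultimately show ?thesis by (rule that)
qed

text \<open>The atoms of \<open>NK\<close> missing from \<open>NKB\<close> come from pruned vertices; if they all lie
within \<open>\<delta>\<close> of 0, the first \<open>N\<close> test functions cannot tell the two point measures apart.\<close>

lemma rho_NK_NKB_le:
  assumes Kn: "K \<le> n" and b: "0 < b n" and \<delta>: "0 < \<delta>"
    and h_vanish: "\<And>i x. i < N \<Longrightarrow> \<bar>x\<bar> < ereal \<delta> \<Longrightarrow> h i x = 0"
    and pruned_small: "\<And>v m k. v \<in> gen xi \<omega> n \<Longrightarrow> n - K \<le> m \<Longrightarrow> m < n \<Longrightarrow> B < v!m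
                 \<Longrightarrow> n - K < k \<Longrightarrow> k \<le> n \<Longrightarrow> \<bar>X (take k v) \<omega>\<bar> < \<delta> * b n"
  shows "rho h (NK xi X b K n \<omega>) (NKB xi X b K B n \<omega>) \<le> (1/2) ^ N"
proof (rule rho_le_if_pm_int_eq)
  fix i assume i: "i < N"
  define I1 where "I1 = {(v, k). v \<in> gen xi \<omega> n \<and> n - K < k \<and> k \<le> n}"
  define I2 where "I2 = {(v, k). v \<in> pruned_gen xi B K \<omega> n \<and> n - K < k \<and> k \<le> n}"
  define g where "g = (\<lambda>(v, k). X (take k v) \<omega> / b n)"
  have fin1: "finite I1"
    by (rule finite_subset[of _ "gen xi \<omega> n \<times> {..n}"]) (auto simp: I1_def finite_gen)
  have sub: "I2 \<subseteq> I1" using Kn by (auto simp: I1_def I2_def pruned_gen_eq)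
  have fin2: "finite I2" using finite_subset[OF sub fin1] .
  have h0: "h i 0 = 0" using h_vanish[OF i, of 0] \<delta> by simp
  have "pm_int (NK xi X b K n \<omega>) (h i) = (\<Sum>p\<in>I1. h i (ereal (g p)))"
    unfolding NK_def I1_def[symmetric] g_def[symmetric] by (rule pm_int_pt_measure[where f="h i", OF fin1 h0])
  also have "\<dots> = (\<Sum>p\<in>I2. h i (ereal (g p)))"
  proof (rule sum.mono_neutral_right[OF fin1 sub], rule ballI)
    fix p assume p: "p \<in> I1 - I2"
    then obtain v k where pv: "p = (v, k)" and v: "v \<in> gen xi \<omega> n" and k: "n - K < k" "k \<le> n"
      and "v \<notin> pruned_gen xi B K \<omega> n"
      by (auto simp: I1_def I2_def)
    then obtain m where m: "n - K \<le> m" "m < n" "B < v!m"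
      using Kn by (auto simp: pruned_gen_eq not_le)
    have "\<bar>X (take k v) \<omega>\<bar> < \<delta> * b n" by (rule pruned_small[OF v m k])
    then have "\<bar>g p\<bar> < \<delta>" using b by (simp add: g_def pv abs_divide pos_divide_less_eq)
    then show "h i (ereal (g p)) = 0" using h_vanish[OF i] by simp
  qed
  also have "\<dots> = pm_int (NKB xi X b K B n \<omega>) (h i)"
    unfolding NKB_def I2_def[symmetric] g_def[symmetric]
    by (rule pm_int_pt_measure[where f="h i", OF fin2 h0, symmetric])
  finally show "pm_int (NK xi X b K n \<omega>) (h i) = pm_int (NKB xi X b K B n \<omega>) (h i)" .
qed

section \<open>Counting pruned vertices with a large edge\<close>

lemma nn_integral_count_space_lists_prod:
  fixes g :: "nat \<Rightarrow> nat \<Rightarrow> ennreal"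
  shows "(\<integral>\<^sup>+v. (\<Prod>k<n. g k (v!k)) \<partial>count_space {v. length v = n})
       = (\<Prod>k<n. \<integral>\<^sup>+j. g k j \<partial>count_space UNIV)"
proof (induction n arbitrary: g)
  case 0
  have "{v::nat list. length v = 0} = {[]}" by auto
  then show ?case by (simp add: nn_integral_count_space_finite)
next
  case (Suc n)
  let ?L = "{v::nat list. length v = n}"
  have bij: "bij_betw (\<lambda>(j,xs). j # xs) (UNIV \<times> ?L) {v. length v = Suc n}"
    by (rule bij_betwI[where g="\<lambda>v. (hd v, tl v)"]) (auto simp: length_Suc_conv)
  have "(\<integral>\<^sup>+v. (\<Prod>k<Suc n. g k (v!k)) \<partial>count_space {v. length v = Suc n})
      = (\<integral>\<^sup>+p. (\<Prod>k<Suc n. g k (((\<lambda>(j,xs). j # xs) p)!k)) \<partial>count_space (UNIV \<times> ?L))"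
    by (rule nn_integral_bij_count_space[symmetric, OF bij])
  also have "\<dots> = (\<integral>\<^sup>+p. (\<Prod>k<Suc n. g k (((\<lambda>(j,xs). j # xs) p)!k))
                      \<partial>(count_space UNIV \<Otimes>\<^sub>M count_space ?L))"
    by (subst pair_measure_countable) auto
  also have "\<dots> = (\<integral>\<^sup>+j. \<integral>\<^sup>+xs. (\<Prod>k<Suc n. g k ((j # xs)!k)) \<partial>count_space ?L \<partial>count_space UNIV)"
    by (subst sigma_finite_measure.nn_integral_fst[symmetric])
       (auto intro!: sigma_finite_measure_count_space_countable simp: pair_measure_countable)
  also have "\<dots> = (\<integral>\<^sup>+j. g 0 j * \<integral>\<^sup>+xs. (\<Prod>k<n. g (Suc k) (xs!k)) \<partial>count_space ?L \<partial>count_space UNIV)"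
    by (subst prod.lessThan_Suc_shift) (simp add: nn_integral_cmult)
  also have "\<dots> = (\<integral>\<^sup>+j. g 0 j \<partial>count_space UNIV) * (\<Prod>k<n. \<integral>\<^sup>+j. g (Suc k) j \<partial>count_space UNIV)"
    using Suc.IH[of "\<lambda>k. g (Suc k)"] by (simp add: nn_integral_multc)
  also have "\<dots> = (\<Prod>k<Suc n. \<integral>\<^sup>+j. g k j \<partial>count_space UNIV)"
    by (subst prod.lessThan_Suc_shift) simp
  finally show ?case .
qed

lemma emeasure_UN_le_nn_integral:
  assumes I: "countable I" and C: "\<And>i. i \<in> I \<Longrightarrow> C i \<in> sets M"
  shows "emeasure M (\<Union>i\<in>I. C i) \<le> (\<integral>\<^sup>+i. emeasure M (C i) \<partial>count_space I)"
proof -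
  have "emeasure M (\<Union>i\<in>I. C i) = (\<integral>\<^sup>+\<omega>. indicator (\<Union>i\<in>I. C i) \<omega> \<partial>M)"
    using I C by (intro nn_integral_indicator[symmetric] sets.countable_UN'') auto
  also have "\<dots> \<le> (\<integral>\<^sup>+\<omega>. (\<integral>\<^sup>+i. indicator (C i) \<omega> \<partial>count_space I) \<partial>M)"
  proof (rule nn_integral_mono)
    fix \<omega>
    show "indicator (\<Union>i\<in>I. C i) \<omega> \<le> (\<integral>\<^sup>+i. indicator (C i) \<omega> \<partial>count_space I)"
    proof (cases "\<omega> \<in> (\<Union>i\<in>I. C i)")
      case True
      then obtain i0 where i0: "i0 \<in> I" "\<omega> \<in> C i0" by auto
      have "1 = (\<integral>\<^sup>+i. indicator {i0} i \<partial>count_space I)"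
        using i0 by (subst nn_integral_indicator) auto
      also have "\<dots> \<le> (\<integral>\<^sup>+i. indicator (C i) \<omega> \<partial>count_space I)"
        by (rule nn_integral_mono) (use i0 in \<open>auto split: split_indicator\<close>)
      finally show ?thesis using True by simp
    qed simp
  qed
  also have "\<dots> = (\<integral>\<^sup>+i. (\<integral>\<^sup>+\<omega>. indicator (C i) \<omega> \<partial>M) \<partial>count_space I)"
    by (rule nn_integral_count_space_nn_integral[OF I]) (use C in auto)
  also have "\<dots> = (\<integral>\<^sup>+i. emeasure M (C i) \<partial>count_space I)"
    by (rule nn_integral_cong) (use C in simp)
  finally show ?thesis .
qed

lemma tendsto_nn_integral_count_space_tail:
  fixes a :: "nat \<Rightarrow> ennreal"
  assumes "(\<integral>\<^sup>+j. a j \<partial>count_space UNIV) \<noteq> \<infinity>"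
  shows "(\<lambda>B. \<integral>\<^sup>+j. a j * indicator {B<..} j \<partial>count_space UNIV) \<longlonglongrightarrow> 0"
proof -
  define N where "N = density (count_space UNIV) a"
  have em: "emeasure N A = (\<integral>\<^sup>+j. a j * indicator A j \<partial>count_space UNIV)" for A
    unfolding N_def by (rule emeasure_density) auto
  have "(\<lambda>B. emeasure N {B<..}) \<longlonglongrightarrow> emeasure N (\<Inter>B. {B<..})"
  proof (rule Lim_emeasure_decseq)
    show "range (\<lambda>B. {B<..}) \<subseteq> sets N" by (simp add: N_def)
    show "decseq (\<lambda>B::nat. {B<..})" by (auto simp: decseq_def)
    fix B :: nat
    have "emeasure N {B<..} \<le> emeasure N UNIV"
      by (rule emeasure_mono) (auto simp: N_def)
    then show "emeasure N {B<..} \<noteq> \<infinity>" using assms by (auto simp: em top_unique)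
  qed
  moreover have "(\<Inter>B. {B<..}) = ({} :: nat set)" by auto
  ultimately show ?thesis by (simp add: em)
qed

locale galton_watson_weights = prob_space M for M :: "'a measure" +
  fixes xi :: "nat list \<Rightarrow> 'a \<Rightarrow> nat" and X :: "nat list \<Rightarrow> 'a \<Rightarrow> real"
  assumes xi_meas[measurable]: "\<And>v. xi v \<in> measurable M (count_space UNIV)"
    and X_meas[measurable]: "\<And>v. X v \<in> borel_measurable M"
    and indep: "indep_vars (\<lambda>_. borel)
                  (\<lambda>i \<omega>. case i of Inl v \<Rightarrow> real (xi v \<omega>) | Inr v \<Rightarrow> X v \<omega>) UNIV"
    and xi_id: "\<And>v. distr M (count_space UNIV) (xi v) = distr M (count_space UNIV) (xi [])"
    and X_id: "\<And>v. distr M borel (X v) = distr M borel (X [])"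
begin

text \<open>The probability that a vertex, given that it is present, has a \<open>j\<close>-th child;
child labels start at 1.\<close>

definition child_prob :: "nat \<Rightarrow> real" where
  "child_prob j = (if 1 \<le> j then prob {\<omega> \<in> space M. j \<le> xi [] \<omega>} else 0)"

lemma child_prob_nonneg: "0 \<le> child_prob j"
  by (simp add: child_prob_def)

definition offspring_tail :: "nat \<Rightarrow> ennreal" where
  "offspring_tail B = (\<integral>\<^sup>+j. ennreal (child_prob j) * indicator {B<..} j \<partial>count_space UNIV)"

definition pruned_large_edge_event :: "nat \<Rightarrow> nat \<Rightarrow> nat \<Rightarrow> real \<Rightarrow> 'a set" where
  "pruned_large_edge_event K B n t = (\<Union>m\<in>{n-K..<n}. \<Union>k\<in>{n-K<..n}. \<Union>v\<in>{v. length v = n}.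
      {\<omega> \<in> space M. B < v!m \<and> v \<in> gw_tree xi \<omega> \<and> t \<le> \<bar>X (take k v) \<omega>\<bar>})"

lemma sets_in_tree_large_edge: "{\<omega> \<in> space M. Q \<and> v \<in> gw_tree xi \<omega> \<and> t \<le> \<bar>X e \<omega>\<bar>} \<in> events"
  unfolding gw_tree_def by measurable

lemma sets_pruned_large_edge_event: "pruned_large_edge_event K B n t \<in> events"
  unfolding pruned_large_edge_event_def
  by (intro sets.countable_UN'' sets_in_tree_large_edge) auto

lemma nn_integral_child_prob:
  assumes "integrable M (\<lambda>\<omega>. real (xi [] \<omega>))"
  shows "(\<integral>\<^sup>+j. ennreal (child_prob j) \<partial>count_space UNIV) = ennreal (expectation (\<lambda>\<omega>. real (xi [] \<omega>)))"
proof -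
  define f where "f j \<omega> = (indicator {\<omega> \<in> space M. j \<le> xi [] \<omega>} \<omega> * indicator {1..} j :: ennreal)"
    for j \<omega>
  have count: "ennreal (real (xi [] \<omega>)) = (\<integral>\<^sup>+j. f j \<omega> \<partial>count_space UNIV)" if "\<omega> \<in> space M" for \<omega>
  proof -
    have "(\<integral>\<^sup>+j. f j \<omega> \<partial>count_space UNIV) = (\<Sum>j\<in>{1..xi [] \<omega>}. f j \<omega>)"
      by (rule nn_integral_count_space') (auto simp: f_def)
    also have "\<dots> = (\<Sum>j\<in>{1..xi [] \<omega>}. 1)" by (rule sum.cong) (use that in \<open>auto simp: f_def\<close>)
    finally show ?thesis by (simp add: ennreal_of_nat_eq_real_of_nat)
  qed
  have "ennreal (expectation (\<lambda>\<omega>. real (xi [] \<omega>))) = (\<integral>\<^sup>+\<omega>. ennreal (real (xi [] \<omega>)) \<partial>M)"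
    by (rule nn_integral_eq_integral[symmetric, OF assms]) simp
  also have "\<dots> = (\<integral>\<^sup>+\<omega>. (\<integral>\<^sup>+j. f j \<omega> \<partial>count_space UNIV) \<partial>M)"
    by (rule nn_integral_cong) (simp add: count)
  also have "\<dots> = (\<integral>\<^sup>+j. (\<integral>\<^sup>+\<omega>. f j \<omega> \<partial>M) \<partial>count_space UNIV)"
    by (rule nn_integral_count_space_nn_integral) (auto simp: f_def)
  also have "\<dots> = (\<integral>\<^sup>+j. ennreal (child_prob j) \<partial>count_space UNIV)"
    by (rule nn_integral_cong)
       (simp add: f_def child_prob_def nn_integral_multc emeasure_eq_measure split: split_indicator)
  finally show ?thesis ..
qed

lemma offspring_tail_tendsto_0:
  assumes "integrable M (\<lambda>\<omega>. real (xi [] \<omega>))"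
  shows "offspring_tail \<longlonglongrightarrow> 0"
  unfolding offspring_tail_def
  by (rule tendsto_nn_integral_count_space_tail) (simp add: nn_integral_child_prob[OF assms])

text \<open>Presence of \<open>v\<close> is the intersection of the events \<open>v!k \<le> xi (take k v)\<close>, which together
with \<open>|X e| \<ge> t\<close> involve pairwise distinct, hence independent, variables.\<close>

lemma prob_in_tree_large_edge:
  assumes lv: "length v = n"
  shows "prob {\<omega> \<in> space M. v \<in> gw_tree xi \<omega> \<and> t \<le> \<bar>X e \<omega>\<bar>}
       = (\<Prod>k<n. child_prob (v!k)) * prob {\<omega> \<in> space M. t \<le> \<bar>X [] \<omega>\<bar>}"
proof (cases "\<exists>k<n. v!k = 0")
  case True
  then obtain k where k: "k < n" "v!k = 0" by auto
  then have empty: "{\<omega> \<in> space M. v \<in> gw_tree xi \<omega> \<and> t \<le> \<bar>X e \<omega>\<bar>} = {}"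
    using lv by (auto simp: gw_tree_iff)
  have "(\<Prod>k<n. child_prob (v!k)) = 0"
    using k by (intro prod_zero) (auto simp: child_prob_def intro!: bexI[of _ k])
  then show ?thesis by (simp only: empty) simp
next
  case False
  then have pos: "\<And>k. k < n \<Longrightarrow> 1 \<le> v!k" by (simp add: Suc_le_eq)
  define F where "F = (\<lambda>i \<omega>. case i of Inl v \<Rightarrow> real (xi v \<omega>) | Inr v \<Rightarrow> X v \<omega>)"
  define S where "S = (\<lambda>i::nat list + nat list. case i of
                         Inl w \<Rightarrow> {real (v!length w)..} | Inr _ \<Rightarrow> {x::real. t \<le> \<bar>x\<bar>})"
  define A where "A = (\<lambda>i. F i -` S i \<inter> space M)"
  define J where "J = insert (Inr e) ((\<lambda>k. Inl (take k v)) ` {..<n})"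
  have ind: "indep_sets (\<lambda>i. {F i -` A \<inter> space M | A. A \<in> sets borel}) UNIV"
    using indep unfolding indep_vars_def2 F_def by simp
  have large_borel: "{x::real. t \<le> \<bar>x\<bar>} \<in> sets borel"
    by (intro borel_closed closed_Collect_le continuous_intros)
  have S_borel: "S i \<in> sets borel" for i
    using large_borel by (cases i) (simp_all add: S_def)
  have inj: "inj_on (\<lambda>k. Inl (take k v) :: nat list + nat list) {..<n}"
    by (rule inj_onI) (use lv in \<open>auto dest: arg_cong[of _ _ length]\<close>)
  have A_edge: "A (Inr e) = {\<omega> \<in> space M. t \<le> \<bar>X e \<omega>\<bar>}"
    unfolding A_def F_def S_def by auto
  have A_vertex: "A (Inl (take k v)) = {\<omega> \<in> space M. v!k \<le> xi (take k v) \<omega>}" if "k < n" for k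
    using that lv unfolding A_def F_def S_def by (auto simp: min_def)
  have "{\<omega> \<in> space M. v \<in> gw_tree xi \<omega> \<and> t \<le> \<bar>X e \<omega>\<bar>} = (\<Inter>j\<in>J. A j)"
    unfolding J_def gw_tree_iff lv using A_edge A_vertex pos by auto
  moreover have "prob (\<Inter>j\<in>J. A j) = (\<Prod>j\<in>J. prob (A j))"
    by (rule indep_setsD[OF ind]) (auto simp: J_def A_def intro!: S_borel)
  ultimately have "prob {\<omega> \<in> space M. v \<in> gw_tree xi \<omega> \<and> t \<le> \<bar>X e \<omega>\<bar>} = (\<Prod>j\<in>J. prob (A j))"
    by simp
  also have "\<dots> = prob (A (Inr e)) * (\<Prod>k<n. prob (A (Inl (take k v))))"
    unfolding J_def by (subst prod.insert) (auto simp: prod.reindex[OF inj])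
  also have "prob (A (Inr e)) = measure (distr M borel (X e)) {x. t \<le> \<bar>x\<bar>}"
    using large_borel by (simp add: A_edge measure_distr vimage_def Int_def conj_commute)
  also have "\<dots> = prob {\<omega> \<in> space M. t \<le> \<bar>X [] \<omega>\<bar>}"
    using large_borel by (simp add: X_id[of e] measure_distr vimage_def Int_def conj_commute)
  also have "(\<Prod>k<n. prob (A (Inl (take k v)))) = (\<Prod>k<n. child_prob (v!k))"
  proof (rule prod.cong[OF refl])
    fix k assume k: "k \<in> {..<n}"
    have "prob {\<omega> \<in> space M. v!k \<le> xi (take k v) \<omega>}
        = measure (distr M (count_space UNIV) (xi (take k v))) {v!k..}"
      by (simp add: measure_distr vimage_def Int_def conj_commute)
    also have "\<dots> = prob {\<omega> \<in> space M. v!k \<le> xi [] \<omega>}"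
      by (simp add: xi_id[of "take k v"] measure_distr vimage_def Int_def conj_commute)
    finally show "prob (A (Inl (take k v))) = child_prob (v!k)"
      using k pos[of k] by (simp add: A_vertex child_prob_def)
  qed
  finally show ?thesis by (simp add: mult.commute)
qed

text \<open>Summing the product formula over all labels \<open>v\<close>: coordinate \<open>m\<close> contributes the tail
\<open>\<Sum>\<^sub>j\<^sub>>\<^sub>B P(Z\<^sub>1 \<ge> j)\<close>, every other coordinate \<open>\<Sum>\<^sub>j P(Z\<^sub>1 \<ge> j) = \<mu>\<close>.\<close>

lemma emeasure_big_label_large_edge_le:
  assumes child_sum: "(\<integral>\<^sup>+j. ennreal (child_prob j) \<partial>count_space UNIV) = ennreal \<mu>"
    and m: "m < n"
  shows "emeasure M (\<Union>v\<in>{v. length v = n}.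
            {\<omega> \<in> space M. B < v!m \<and> v \<in> gw_tree xi \<omega> \<and> t \<le> \<bar>X (take k v) \<omega>\<bar>})
       \<le> ennreal \<mu> ^ (n - 1) * offspring_tail B * ennreal (prob {\<omega> \<in> space M. t \<le> \<bar>X [] \<omega>\<bar>})"
proof -
  let ?pX = "prob {\<omega> \<in> space M. t \<le> \<bar>X [] \<omega>\<bar>}"
  define C where "C v = {\<omega> \<in> space M. B < v!m \<and> v \<in> gw_tree xi \<omega> \<and> t \<le> \<bar>X (take k v) \<omega>\<bar>}"
    for v :: "nat list"
  define G where "G k' j = ennreal (child_prob j) * (if k' = m then indicator {B<..} j else 1)"
    for k' j :: nat
  have "emeasure M (\<Union>v\<in>{v. length v = n}. C v)
      \<le> (\<integral>\<^sup>+v. emeasure M (C v) \<partial>count_space {v. length v = n})"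
    by (rule emeasure_UN_le_nn_integral) (auto simp: C_def sets_in_tree_large_edge)
  also have "\<dots> = (\<integral>\<^sup>+v. (\<Prod>k'<n. G k' (v!k')) * ennreal ?pX \<partial>count_space {v. length v = n})"
  proof (rule nn_integral_cong)
    fix v assume "v \<in> space (count_space {v::nat list. length v = n})"
    then have lv: "length v = n" by simp
    show "emeasure M (C v) = (\<Prod>k'<n. G k' (v!k')) * ennreal ?pX"
    proof (cases "B < v!m")
      case True
      have "emeasure M (C v) = ennreal ((\<Prod>k'<n. child_prob (v!k')) * ?pX)"
        using True by (simp add: C_def emeasure_eq_measure prob_in_tree_large_edge[OF lv])
      also have "\<dots> = (\<Prod>k'<n. ennreal (child_prob (v!k'))) * ennreal ?pX"
        by (simp add: ennreal_mult prod_nonneg child_prob_nonneg prod_ennreal)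
      also have "(\<Prod>k'<n. ennreal (child_prob (v!k'))) = (\<Prod>k'<n. G k' (v!k'))"
        using True by (intro prod.cong) (auto simp: G_def)
      finally show ?thesis .
    next
      case False
      then have "(\<Prod>k'<n. G k' (v!k')) = 0"
        using m by (intro prod_zero) (auto simp: G_def intro!: bexI[of _ m])
      then show ?thesis using False by (simp add: C_def)
    qed
  qed
  also have "\<dots> = (\<Prod>k'<n. \<integral>\<^sup>+j. G k' j \<partial>count_space UNIV) * ennreal ?pX"
    by (simp add: nn_integral_multc nn_integral_count_space_lists_prod)
  also have "(\<Prod>k'<n. \<integral>\<^sup>+j. G k' j \<partial>count_space UNIV)
      = (\<integral>\<^sup>+j. G m j \<partial>count_space UNIV) * (\<Prod>k'\<in>{..<n} - {m}. \<integral>\<^sup>+j. G k' j \<partial>count_space UNIV)"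
    by (rule prod.remove) (use m in auto)
  also have "\<dots> = offspring_tail B * ennreal \<mu> ^ (n - 1)"
    using m by (simp add: G_def offspring_tail_def child_sum)
  finally show ?thesis unfolding C_def by (simp add: mult_ac)
qed

lemma emeasure_pruned_large_edge_event_le:
  assumes child_sum: "(\<integral>\<^sup>+j. ennreal (child_prob j) \<partial>count_space UNIV) = ennreal \<mu>"
    and Kn: "K \<le> n"
  shows "emeasure M (pruned_large_edge_event K B n t)
       \<le> of_nat K * of_nat K *
           (ennreal \<mu> ^ (n - 1) * offspring_tail B * ennreal (prob {\<omega> \<in> space M. t \<le> \<bar>X [] \<omega>\<bar>}))"
proof -
  define C where "C m k = (\<Union>v\<in>{v. length v = n}.
      {\<omega> \<in> space M. B < v!m \<and> v \<in> gw_tree xi \<omega> \<and> t \<le> \<bar>X (take k v) \<omega>\<bar>})" for m k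
  have C_sets: "C m k \<in> events" for m k
    unfolding C_def by (intro sets.countable_UN'' sets_in_tree_large_edge) auto
  have "emeasure M (pruned_large_edge_event K B n t) \<le> (\<Sum>m\<in>{n-K..<n}. emeasure M (\<Union>k\<in>{n-K<..n}. C m k))"
    unfolding pruned_large_edge_event_def C_def[symmetric]
    by (rule emeasure_subadditive_finite) (auto intro!: sets.finite_UN C_sets)
  also have "\<dots> \<le> (\<Sum>m\<in>{n-K..<n}. \<Sum>k\<in>{n-K<..n}. emeasure M (C m k))"
    by (intro sum_mono emeasure_subadditive_finite) (auto intro: C_sets)
  also have "\<dots> \<le> (\<Sum>m\<in>{n-K..<n}. \<Sum>k\<in>{n-K<..n}.
      ennreal \<mu> ^ (n - 1) * offspring_tail B * ennreal (prob {\<omega> \<in> space M. t \<le> \<bar>X [] \<omega>\<bar>}))"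
    unfolding C_def by (intro sum_mono emeasure_big_label_large_edge_le[OF child_sum]) auto
  finally show ?thesis using Kn by (simp add: mult_ac)
qed

lemma offspring_tail_finite:
  assumes "integrable M (\<lambda>\<omega>. real (xi [] \<omega>))"
  shows "offspring_tail B < \<infinity>"
proof -
  have "offspring_tail B \<le> (\<integral>\<^sup>+j. ennreal (child_prob j) \<partial>count_space UNIV)"
    unfolding offspring_tail_def by (rule nn_integral_mono) (simp split: split_indicator)
  then show ?thesis by (simp add: nn_integral_child_prob[OF assms] top.not_eq_extremum le_less_trans)
qed

lemma rho_gt_subset_pruned_large_edge_event:
  assumes Kn: "K \<le> n" and b: "0 < b n" and \<delta>: "0 < \<delta>"
    and h_vanish: "\<And>i x. i < N \<Longrightarrow> \<bar>x\<bar> < ereal \<delta> \<Longrightarrow> h i x = 0"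
    and N: "(1/2) ^ N < \<epsilon>"
  shows "{\<omega> \<in> space M. \<epsilon> < rho h (NK xi X b K n \<omega>) (NKB xi X b K B n \<omega>)}
       \<subseteq> pruned_large_edge_event K B n (\<delta> * b n)"
proof
  fix \<omega> assume \<omega>: "\<omega> \<in> {\<omega> \<in> space M. \<epsilon> < rho h (NK xi X b K n \<omega>) (NKB xi X b K B n \<omega>)}"
  show "\<omega> \<in> pruned_large_edge_event K B n (\<delta> * b n)"
  proof (rule ccontr)
    assume "\<omega> \<notin> pruned_large_edge_event K B n (\<delta> * b n)"
    with \<omega> have "rho h (NK xi X b K n \<omega>) (NKB xi X b K B n \<omega>) \<le> (1/2) ^ N"
      by (intro rho_NK_NKB_le[where b=b and n=n and h=h, OF Kn b \<delta> h_vanish])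
         (auto simp: pruned_large_edge_event_def gen_def not_le)
    with \<omega> N show False by simp
  qed
qed

lemma Pstar_rho_gt_le:
  assumes Z_int: "integrable M (\<lambda>\<omega>. real (xi [] \<omega>))"
    and \<mu>: "\<mu> = expectation (\<lambda>\<omega>. real (xi [] \<omega>))" "0 < \<mu>"
    and Kn: "K \<le> n" and n: "0 < n" and b: "0 < b n" and \<delta>: "0 < \<delta>"
    and h_vanish: "\<And>i x. i < N \<Longrightarrow> \<bar>x\<bar> < ereal \<delta> \<Longrightarrow> h i x = 0"
    and N: "(1/2) ^ N < \<epsilon>"
    and C: "\<mu> ^ n * prob {\<omega> \<in> space M. \<delta> * b n \<le> \<bar>X [] \<omega>\<bar>} \<le> C"
  shows "Pstar M xi {\<omega> \<in> space M. \<epsilon> < rho h (NK xi X b K n \<omega>) (NKB xi X b K B n \<omega>)}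
       \<le> real K * real K * C / (\<mu> * prob {\<omega> \<in> space M. survives xi \<omega>}) * enn2real (offspring_tail B)"
proof -
  define pX where "pX = prob {\<omega> \<in> space M. \<delta> * b n \<le> \<bar>X [] \<omega>\<bar>}"
  define T where "T = enn2real (offspring_tail B)"
  define U where "U = pruned_large_edge_event K B n (\<delta> * b n)"
  have T: "offspring_tail B = ennreal T" "0 \<le> T"
    using offspring_tail_finite[OF Z_int] by (simp_all add: T_def)
  have "ennreal (prob U) = emeasure M U" by (simp add: emeasure_eq_measure)
  also have "\<dots> \<le> of_nat K * of_nat K * (ennreal \<mu> ^ (n - 1) * ennreal T * ennreal pX)"
    unfolding U_def pX_def T(1)[symmetric]
    by (rule emeasure_pruned_large_edge_event_le[OF _ Kn]) (simp add: nn_integral_child_prob[OF Z_int] \<mu>)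
  also have "\<dots> = ennreal (real K * real K * (\<mu> ^ (n - 1) * pX) * T)"
    using \<mu>(2) T(2) by (simp add: ennreal_mult ennreal_power ennreal_of_nat_eq_real_of_nat pX_def mult_ac)
  finally have "prob U \<le> real K * real K * (\<mu> ^ (n - 1) * pX) * T"
    using \<mu>(2) T(2) by (subst (asm) ennreal_le_iff) (simp_all add: pX_def)
  also have "\<mu> ^ (n - 1) * pX = \<mu> ^ n * pX / \<mu>"
    using n \<mu>(2) by (cases n) simp_all
  also have "\<dots> \<le> C / \<mu>"
    using C \<mu>(2) by (simp add: pX_def divide_right_mono)
  finally have U_le: "prob U \<le> real K * real K * C / \<mu> * T"
    using T(2) by (simp add: mult_right_mono mult_left_mono)
  have "Pstar M xi {\<omega> \<in> space M. \<epsilon> < rho h (NK xi X b K n \<omega>) (NKB xi X b K B n \<omega>)}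
      \<le> prob U / prob {\<omega> \<in> space M. survives xi \<omega>}"
    unfolding Pstar_def U_def
    by (intro divide_right_mono finite_measure_mono sets_pruned_large_edge_event
        order.trans[OF _ rho_gt_subset_pruned_large_edge_event[where b=b and n=n and h=h, OF Kn b \<delta> h_vanish N]]) auto
  also have "\<dots> \<le> real K * real K * C / \<mu> * T / prob {\<omega> \<in> space M. survives xi \<omega>}"
    by (rule divide_right_mono[OF U_le]) simp
  finally show ?thesis by (simp add: T_def divide_inverse mult_ac)
qed

end

section \<open>The tail of the edge weights at scale \<open>b\<^sub>n\<close>\<close>

lemma exists_bump:
  assumes d: "0 < (\<delta>::real)"
  obtains f where "CK f" "\<And>x. 0 \<le> f x \<and> f x \<le> 1" "\<And>x::real. \<delta> \<le> \<bar>x\<bar> \<Longrightarrow> f (ereal x) = 1"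
proof -
  define cl where "cl x = max (ereal (-\<delta>)) (min (ereal \<delta>) x)" for x
  define \<phi> where "\<phi> y = min 1 (max 0 ((2 / \<delta>) * \<bar>y\<bar> - 1))" for y :: real
  define f where "f x = \<phi> (real_of_ereal (cl x))" for x
  have cl_finite: "cl x \<in> UNIV - {\<infinity>, -\<infinity>}" for x
  proof -
    have "ereal (-\<delta>) \<le> cl x" "cl x \<le> ereal \<delta>" using d unfolding cl_def by auto
    then show ?thesis by auto
  qed
  have "continuous_on UNIV cl" unfolding cl_def by (intro continuous_intros)
  then have cl_cont: "continuous_on UNIV (\<lambda>x. real_of_ereal (cl x))"
    by (rule continuous_on_compose2[OF continuous_on_real]) (use cl_finite in auto)
  have "continuous_on UNIV \<phi>" unfolding \<phi>_def by (intro continuous_intros)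
  then have f_cont: "continuous_on UNIV f"
    unfolding f_def by (rule continuous_on_compose2[OF _ cl_cont]) auto
  have f_vanish: "f x = 0" if x: "\<bar>x\<bar> < ereal (\<delta>/2)" for x
  proof -
    obtain r where r: "x = ereal r" "\<bar>r\<bar> < \<delta>/2" using x by (cases x) auto
    then have "cl x = ereal r" using d by (auto simp: cl_def)
    moreover have "2 * \<bar>r\<bar> / \<delta> - 1 < 0" using r d by (simp add: field_simps)
    ultimately show "f x = 0" by (simp add: f_def \<phi>_def)
  qed
  have f_one: "f (ereal x) = 1" if "\<delta> \<le> \<bar>x\<bar>" for x
  proof -
    have "cl (ereal x) = ereal \<delta> \<or> cl (ereal x) = ereal (-\<delta>)"
      using that d by (auto simp: cl_def min_def max_def)
    then have "\<bar>real_of_ereal (cl (ereal x))\<bar> = \<delta>" using d by force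
    then show ?thesis using d by (simp add: f_def \<phi>_def)
  qed
  have "CK f"
    unfolding CK_def using f_cont f_vanish d by (intro conjI exI[of _ "\<delta>/2"]) auto
  moreover have "0 \<le> f x \<and> f x \<le> 1" for x by (simp add: f_def \<phi>_def)
  ultimately show ?thesis using f_one by (rule that)
qed

lemma pow_mult_tail_prob_bounded:
  fixes X :: "'a \<Rightarrow> real"
  assumes P: "prob_space M" and X[measurable]: "X \<in> borel_measurable M" and b: "\<And>n. 0 < b n"
    and \<mu>: "0 < \<mu>" and \<delta>: "0 < \<delta>"
    and vague: "\<And>f. CK f \<Longrightarrow> (\<lambda>n. \<mu> ^ n * (\<integral>\<omega>. f (ereal (X \<omega> / b n)) \<partial>M)) \<longlonglongrightarrow> L f"
  obtains C where "\<And>n. \<mu> ^ n * measure M {\<omega> \<in> space M. \<delta> * b n \<le> \<bar>X \<omega>\<bar>} \<le> C"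
proof -
  interpret prob_space M by (rule P)
  obtain f where f: "CK f" "\<And>x. 0 \<le> f x \<and> f x \<le> 1" "\<And>x::real. \<delta> \<le> \<bar>x\<bar> \<Longrightarrow> f (ereal x) = 1"
    using exists_bump[OF \<delta>] by blast
  obtain C where C: "\<And>n. norm (\<mu> ^ n * (\<integral>\<omega>. f (ereal (X \<omega> / b n)) \<partial>M)) \<le> C"
    using convergent_imp_Bseq[OF convergentI[OF vague[OF f(1)]]] unfolding Bseq_def by blast
  have f_borel[measurable]: "f \<in> borel_measurable borel"
    using f(1) by (intro borel_measurable_continuous_onI) (simp add: CK_def)
  have "\<mu> ^ n * prob {\<omega> \<in> space M. \<delta> * b n \<le> \<bar>X \<omega>\<bar>} \<le> C" for n
  proof -
    let ?A = "{\<omega> \<in> space M. \<delta> * b n \<le> \<bar>X \<omega>\<bar>}"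
    have A: "?A \<in> events" by measurable
    have f_meas: "(\<lambda>\<omega>. f (ereal (X \<omega> / b n))) \<in> borel_measurable M" by measurable
    have f_int: "integrable M (\<lambda>\<omega>. f (ereal (X \<omega> / b n)))"
      by (rule integrable_const_bound[where B=1]) (use f(2) f_meas in auto)
    have "prob ?A = (\<integral>\<omega>. indicator ?A \<omega> \<partial>M)" using A by simp
    also have "\<dots> \<le> (\<integral>\<omega>. f (ereal (X \<omega> / b n)) \<partial>M)"
    proof (rule integral_mono[OF _ f_int])
      show "integrable M (indicator ?A :: 'a \<Rightarrow> real)"
        using A by (simp add: emeasure_eq_measure)
      fix \<omega>
      have "\<delta> \<le> \<bar>X \<omega> / b n\<bar>" if "\<omega> \<in> ?A"
        using that b[of n] by (simp add: abs_divide pos_le_divide_eq)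
      then show "indicator ?A \<omega> \<le> f (ereal (X \<omega> / b n))"
        using f(2,3) by (simp split: split_indicator)
    qed
    finally have "\<mu> ^ n * prob ?A \<le> \<mu> ^ n * (\<integral>\<omega>. f (ereal (X \<omega> / b n)) \<partial>M)"
      using \<mu> by (simp add: mult_left_mono)
    also have "\<dots> \<le> C" using C[of n] by simp
    finally show ?thesis .
  qed
  then show ?thesis by (rule that)
qed

lemma limsup_tendsto_0_if_dominated:
  fixes f :: "nat \<Rightarrow> nat \<Rightarrow> real"
  assumes nonneg: "\<And>B n. 0 \<le> f B n" and le: "\<And>B n. K \<le> n \<Longrightarrow> f B n \<le> t B"
    and t: "t \<longlonglongrightarrow> 0"
  shows "((\<lambda>B. limsup (\<lambda>n. ereal (f B n))) \<longlongrightarrow> 0) at_top"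
proof (rule tendsto_sandwich[OF _ _ tendsto_const])
  show "\<forall>\<^sub>F B in sequentially. 0 \<le> limsup (\<lambda>n. ereal (f B n))"
    by (intro always_eventually allI le_Limsup) (simp_all add: nonneg)
  show "\<forall>\<^sub>F B in sequentially. limsup (\<lambda>n. ereal (f B n)) \<le> ereal (t B)"
    by (rule always_eventually, rule allI, rule Limsup_bounded, rule eventually_sequentiallyI[of K])
       (simp add: le)
  show "((\<lambda>B. ereal (t B)) \<longlongrightarrow> 0) sequentially"
    unfolding zero_ereal_def using t by (rule tendsto_ereal)
qed

theorem lemma3p3:
  fixes M :: "'a measure"
    and xi :: "nat list \<Rightarrow> 'a \<Rightarrow> nat"
    and X :: "nat list \<Rightarrow> 'a \<Rightarrow> real"
    and \<mu> \<alpha> p q :: real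
    and b :: "nat \<Rightarrow> real"
    and h :: "nat \<Rightarrow> ereal \<Rightarrow> real"
    and K :: nat
  assumes P: "prob_space M"
    and xi_meas: "\<And>v. xi v \<in> measurable M (count_space UNIV)"
    and X_meas: "\<And>v. X v \<in> borel_measurable M"
    and indep: "prob_space.indep_vars M (\<lambda>_. borel)
                  (\<lambda>i \<omega>. case i of Inl v \<Rightarrow> real (xi v \<omega>) | Inr v \<Rightarrow> X v \<omega>) UNIV"
    and xi_id: "\<And>v. distr M (count_space UNIV) (xi v) = distr M (count_space UNIV) (xi [])"
    and X_id: "\<And>v. distr M borel (X v) = distr M borel (X [])"
    and Z_int: "integrable M (\<lambda>\<omega>. real (xi [] \<omega>))"
    and mu_def: "\<mu> = (\<integral>\<omega>. real (xi [] \<omega>) \<partial>M)"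
    and mu_gt: "1 < \<mu>"
    and LlogL: "integrable M (\<lambda>\<omega>. real (xi [] \<omega>) * max 0 (ln (real (xi [] \<omega>))))"
    and alpha_pos: "0 < \<alpha>"
    and tail: "\<exists>L. slowly_varying L \<and>
                 (\<forall>x>0. measure M {\<omega> \<in> space M. \<bar>X [] \<omega>\<bar> > x} = x powr (- \<alpha>) * L x)"
    and pq: "0 \<le> p" "0 \<le> q" "p + q = 1"
    and tail_p: "((\<lambda>x. measure M {\<omega> \<in> space M. X [] \<omega> > x}
                    / measure M {\<omega> \<in> space M. \<bar>X [] \<omega>\<bar> > x}) \<longlongrightarrow> p) at_top"
    and tail_q: "((\<lambda>x. measure M {\<omega> \<in> space M. X [] \<omega> < - x}
                    / measure M {\<omega> \<in> space M. \<bar>X [] \<omega>\<bar> > x}) \<longlongrightarrow> q) at_top"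
    and b_pos: "\<And>n. 0 < b n"
    and vague: "\<And>f. CK f \<Longrightarrow>
                  (\<lambda>n. \<mu> ^ n * (\<integral>\<omega>. f (ereal (X [] \<omega> / b n)) \<partial>M)) \<longlonglongrightarrow> nu_int \<alpha> p q f"
    and h_nonneg: "\<And>i x. 0 \<le> h i x"
    and h_lip: "\<And>i. lipschitz_E (h i)"
    and h_CK: "\<And>i. CK (h i)"
    and h_metr: "metrizes_vague h"
    and K_gt: "1 < K"
  shows "\<forall>\<epsilon>>0. ((\<lambda>B. limsup (\<lambda>n. ereal (Pstar M xi
            {\<omega> \<in> space M. rho h (NK xi X b K n \<omega>) (NKB xi X b K B n \<omega>) > \<epsilon>})))
          \<longlongrightarrow> 0) at_top"
proof (intro allI impI)
  fix \<epsilon> :: real assume \<epsilon>: "0 < \<epsilon>"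
  interpret galton_watson_weights M xi X
    by (intro galton_watson_weights.intro galton_watson_weights_axioms.intro P xi_meas X_meas
        indep xi_id X_id)
  obtain N where N: "(1/2::real) ^ N < \<epsilon>"
    using real_arch_pow_inv[OF \<epsilon>, of "1/2"] by auto
  obtain \<delta> where \<delta>: "0 < \<delta>" "\<And>i x. i < N \<Longrightarrow> \<bar>x\<bar> < ereal \<delta> \<Longrightarrow> h i x = 0"
    using CK_vanish_uniform[of h N, OF h_CK] by blast
  have \<mu>: "0 < \<mu>" using mu_gt by simp
  obtain C where C: "\<And>n. \<mu> ^ n * prob {\<omega> \<in> space M. \<delta> * b n \<le> \<bar>X [] \<omega>\<bar>} \<le> C"
    using pow_mult_tail_prob_bounded[OF P X_meas b_pos \<mu> \<delta>(1) vague] by blast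
  define c where "c = real K * real K * C / (\<mu> * prob {\<omega> \<in> space M. survives xi \<omega>})"
  have "Pstar M xi {\<omega> \<in> space M. \<epsilon> < rho h (NK xi X b K n \<omega>) (NKB xi X b K B n \<omega>)}
      \<le> c * enn2real (offspring_tail B)" if "K \<le> n" for B n
    unfolding c_def using that K_gt
    by (intro Pstar_rho_gt_le[where b=b and h=h and \<delta>=\<delta> and N=N and C=C] Z_int mu_def \<mu> b_pos \<delta> N C) auto
  moreover have "(\<lambda>B. enn2real (offspring_tail B)) \<longlonglongrightarrow> 0"
    using offspring_tail_tendsto_0[OF Z_int] by (intro tendsto_enn2real) simp_all
  then have "(\<lambda>B. c * enn2real (offspring_tail B)) \<longlonglongrightarrow> 0"
    by (rule tendsto_mult_right_zero)
  ultimately show "((\<lambda>B. limsup (\<lambda>n. ereal (Pstar M xi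
            {\<omega> \<in> space M. rho h (NK xi X b K n \<omega>) (NKB xi X b K B n \<omega>) > \<epsilon>}))) \<longlongrightarrow> 0) at_top"
    by (intro limsup_tendsto_0_if_dominated[where K=K]) (auto simp: Pstar_def)
qed

end
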